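(* Fix $k\in\mathbb{N}$ and positive constants $b_0,b_1,b_2,\lambda_0,\lambda_1$. There exists $C>0$ depending only on $b_0,b_1,\lambda_0,\lambda_1$ (and the fixed $k$) such that the following holds. Let $T\geq10$, $\ell<r$, $a^\pm\in\mathbb{R}^k$, $g:[\ell,r]\to\mathbb{R}$ Lipschitz with $g(\ell)=g(r)=0$, and $P\subset(\ell,\ell+T^{1/2})\cap(\ell,r)$ finite. Suppose that $r-\ell\leq b_0T$, $|P|\leq b_0T$, $|g(x)-g(y)|\leq b_1T|x-y|$ for all $x,y$, $a^\pm_j-a^\pm_{j+1}\geq\lambda_0T^{1/2}$ for $j\in\{1,\dots,k-1\}$, $a^-_k-g(\ell)\geq\lambda_1T$, $a^+_k-g(r)\geq\lambda_1T$, $a^-_1-g(\ell)\leq b_2T^2$, $a^+_1-g(r)\leq b_2T^2$. Then $\mathbb{E}_{\mathrm{free}}[W]\geq C^{-1}e^{-CT^{5/2}}$.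
   Context: $\mathbb{P}_{\mathrm{free}}$ (expectation $\mathbb{E}_{\mathrm{free}}$) is the law of $k$ independent Brownian bridges (diffusion parameter one) $\mathcal{L}=(\mathcal{L}_1,\dots,\mathcal{L}_k)$ on $[\ell,r]$ with $\mathcal{L}_j(\ell)=a^-_j$, $\mathcal{L}_j(r)=a^+_j$. $W(\mathcal{L})=1$ if $\mathcal{L}_j(p)>g(p)$ for all $p\in P$ and $j\in\{1,\dots,k\}$, and $W(\mathcal{L})=0$ otherwise. *)

theory Defs
  imports "HOL-Probability.Probability"
begin

definition heat :: "real \<Rightarrow> real \<Rightarrow> real" where
  "heat s y = normal_density 0 (sqrt s) y"

text \<open>Times t_0 = l < t_1 < ... < t_m < t_(m+1) = r, where ts = [t_1,...,t_m].\<close>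
definition bb_time :: "real \<Rightarrow> real \<Rightarrow> real list \<Rightarrow> nat \<Rightarrow> real" where
  "bb_time l r ts i = (if i = 0 then l else if i \<le> length ts then ts ! (i - 1) else r)"

text \<open>Joint Lebesgue density of (B(t_1),...,B(t_m)) for a Brownian bridge B on [l,r]
  with B(l) = a, B(r) = b (finite-dimensional distributions of the Brownian bridge),
  x i being the value at time t_(i+1).\<close>
definition bb_density :: "real \<Rightarrow> real \<Rightarrow> real \<Rightarrow> real \<Rightarrow> real list \<Rightarrow> (nat \<Rightarrow> real) \<Rightarrow> real" where
  "bb_density l r a b ts x =
     (let m = length ts;
          pos = (\<lambda>i. if i = 0 then a else if i \<le> m then x (i - 1) else b)
      in (\<Prod>i\<le>m. heat (bb_time l r ts (Suc i) - bb_time l r ts i) (pos (Suc i) - pos i))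
         / heat (r - l) (b - a))"

text \<open>E_free[W]: expectation of W(L) = 1[L_j(p) > g(p) for all p in P, j in 1..k] under the law of
  k independent Brownian bridges L_j on [l,r] from am j to ap j. Since W depends only on the
  values at the finitely many points of P, it is the integral of the indicator against the
  joint density of (L_j(p))_{j,p}, which is the product over j of the bridge densities.\<close>
definition E_free_W :: "nat \<Rightarrow> real \<Rightarrow> real \<Rightarrow> (nat \<Rightarrow> real) \<Rightarrow> (nat \<Rightarrow> real)
     \<Rightarrow> (real \<Rightarrow> real) \<Rightarrow> real set \<Rightarrow> ennreal" where
  "E_free_W k l r am ap g P =
     (let ts = sorted_list_of_set P; m = length ts
      in \<integral>\<^sup>+ x. indicator {x. \<forall>j\<in>{1..k}. \<forall>i<m. x (j, i) > g (ts ! i)} x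
                 * ennreal (\<Prod>j\<in>{1..k}. bb_density l r (am j) (ap j) ts (\<lambda>i. x (j, i)))
           \<partial>(PiM ({1..k} \<times> {..<m}) (\<lambda>_. lborel)))"

end

theory Submission
  imports Defs
begin

text \<open>Since g is b1 T-Lipschitz and vanishes at l and r, it lies below the tent
  \<beta> min (x - l) (r - x) with \<beta> = b1 T, so it suffices to keep the curves above the tent at the
  points of P. These are integrated out one at a time from left to right. Given a value above the
  tent at the previous point p, the bridge to the endpoint has at the next point q a mean at most
  2 \<beta> (q - p) below the tent, so staying above the tent there costs at most a factor
  exp (- 8 \<beta>^2 (q - p) - 3) against the free bridge. As P lies in (l, l + sqrt T) and has at
  most b0 T points, the k curves lose at most exp (- k (8 b1^2 T^2 sqrt T + 3 b0 T)).
  Of the hypotheses on the boundary values only their nonnegativity is needed.\<close>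

section \<open>The heat kernel\<close>

lemma heat_nonneg [simp]: "0 \<le> heat s y"
  by (simp add: heat_def)

lemma heat_pos: "s > 0 \<Longrightarrow> heat s y > 0"
  by (simp add: heat_def normal_density_pos)

lemma heat_eq_exp: "s > 0 \<Longrightarrow> heat s y = exp (- y\<^sup>2 / (2 * s)) / sqrt (2 * pi * s)"
  by (simp add: heat_def normal_density_def)

lemma heat_measurable [measurable]: "heat s \<in> borel_measurable borel"
  unfolding heat_def by measurable

lemma heat_mult_heat:
  assumes "s > 0" "t > 0"
  shows "heat s (y - u) * heat t (v - y)
    = heat (s + t) (v - u) * heat (s * t / (s + t)) (y - (t * u + s * v) / (s + t))"
proof -
  define w where "w = s * t / (s + t)"
  define \<mu> where "\<mu> = (t * u + s * v) / (s + t)"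
  have w: "w > 0" using assms by (simp add: w_def)
  have "s + t \<noteq> 0" using assms by simp
  then have centre: "y - \<mu> = ((s + t) * y - t * u - s * v) / (s + t)"
    by (simp add: \<mu>_def field_simps)
  have exponent: "- (y - u)\<^sup>2 / (2 * s) + - (v - y)\<^sup>2 / (2 * t)
      = - (v - u)\<^sup>2 / (2 * (s + t)) + - (y - \<mu>)\<^sup>2 / (2 * w)"
    unfolding centre w_def using assms \<open>s + t \<noteq> 0\<close>
    by (simp add: divide_simps power2_eq_square) algebra
  have normaliser: "sqrt (2 * pi * s) * sqrt (2 * pi * t) = sqrt (2 * pi * (s + t)) * sqrt (2 * pi * w)"
    using assms by (simp add: w_def real_sqrt_mult[symmetric] field_simps)
  have "heat s (y - u) * heat t (v - y)
      = exp (- (y - u)\<^sup>2 / (2 * s) + - (v - y)\<^sup>2 / (2 * t)) / (sqrt (2 * pi * s) * sqrt (2 * pi * t))"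
    using assms by (simp add: heat_eq_exp mult_exp_exp)
  also have "\<dots> = heat (s + t) (v - u) * heat w (y - \<mu>)"
    unfolding exponent normaliser using assms w by (simp add: heat_eq_exp mult_exp_exp)
  finally show ?thesis by (simp add: w_def \<mu>_def)
qed

lemma two_pi_le_exp_4: "2 * pi \<le> exp (4::real)"
proof -
  have "3 \<le> exp (2::real)" using exp_ge_add_one_self[of 2] by simp
  then have "3 * 3 \<le> exp (2::real) * exp 2" by (intro mult_mono) auto
  then show ?thesis using pi_less_4 by (simp add: exp_add[symmetric])
qed

lemma heat_ge:
  assumes "w > 0" "d \<ge> 0" "0 \<le> z" "z \<le> d + sqrt w"
  shows "exp (- (d\<^sup>2 / w) - 3) / sqrt w \<le> heat w z"
proof -
  have "z\<^sup>2 \<le> (d + sqrt w)\<^sup>2" using assms by (intro power_mono) auto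
  also have "\<dots> \<le> 2 * d\<^sup>2 + 2 * w"
    using assms sum_squares_bound[of d "sqrt w"] by (simp add: power2_eq_square algebra_simps)
  finally have "z\<^sup>2 / (2 * w) \<le> d\<^sup>2 / w + 1" using assms by (simp add: field_simps)
  then have exponent: "- (d\<^sup>2 / w) - 1 \<le> - z\<^sup>2 / (2 * w)" by simp
  have "sqrt (2 * pi * w) \<le> sqrt ((exp 2)\<^sup>2 * w)"
    using two_pi_le_exp_4 assms by (simp add: power2_eq_square exp_add[symmetric])
  then have normaliser: "sqrt (2 * pi * w) \<le> exp 2 * sqrt w"
    by (simp add: real_sqrt_mult)
  have "exp (- (d\<^sup>2 / w) - 3) / sqrt w = exp (- (d\<^sup>2 / w) - 1) / (exp 2 * sqrt w)"
    by (simp add: exp_diff field_simps exp_add[symmetric])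
  also have "\<dots> \<le> exp (- z\<^sup>2 / (2 * w)) / sqrt (2 * pi * w)"
    using exponent normaliser assms by (intro frac_le) auto
  finally show ?thesis using assms by (simp add: heat_eq_exp)
qed

text \<open>By heat_mult_heat the integrand is heat (s + t) (v - u) times the Gaussian density with
  mean (t u + s v)/(s + t) and variance s t/(s + t); it is bounded below on the window of length
  one standard deviation starting at max G mean.\<close>
lemma nn_integral_heat_bridge_above_ge:
  assumes s: "s > 0" and t: "t > 0" and d: "d \<ge> 0"
    and mean: "G - d \<le> (t * u + s * v) / (s + t)"
  shows "ennreal (heat (s + t) (v - u) * exp (- (d\<^sup>2 * (s + t) / (s * t)) - 3))
    \<le> (\<integral>\<^sup>+y. ennreal (if G < y then heat s (y - u) * heat t (v - y) else 0) \<partial>lborel)"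
proof -
  define w where "w = s * t / (s + t)"
  define \<mu> where "\<mu> = (t * u + s * v) / (s + t)"
  define A where "A = max G \<mu>"
  define c where "c = heat (s + t) (v - u) * (exp (- (d\<^sup>2 / w) - 3) / sqrt w)"
  have w: "w > 0" using s t by (simp add: w_def)
  have below: "ennreal c * indicator {A<..A + sqrt w} y
      \<le> ennreal (if G < y then heat s (y - u) * heat t (v - y) else 0)" for y
  proof (cases "y \<in> {A<..A + sqrt w}")
    case True
    then have "G < y" "0 \<le> y - \<mu>" "y - \<mu> \<le> d + sqrt w"
      using mean d by (auto simp: A_def \<mu>_def)
    moreover have "c \<le> heat (s + t) (v - u) * heat w (y - \<mu>)"
      unfolding c_def using heat_ge[OF w d] calculation(2,3) by (intro mult_left_mono) auto
    ultimately show ?thesis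
      using True by (simp add: heat_mult_heat[OF s t] w_def \<mu>_def ennreal_leI)
  qed simp
  have "ennreal (heat (s + t) (v - u) * exp (- (d\<^sup>2 / w) - 3)) = ennreal c * emeasure lborel {A<..A + sqrt w}"
    using w by (simp add: c_def ennreal_mult[symmetric])
  also have "\<dots> = (\<integral>\<^sup>+y. ennreal c * indicator {A<..A + sqrt w} y \<partial>lborel)"
    by (rule nn_integral_cmult_indicator[symmetric]) simp
  also have "\<dots> \<le> (\<integral>\<^sup>+y. ennreal (if G < y then heat s (y - u) * heat t (v - y) else 0) \<partial>lborel)"
    by (intro nn_integral_mono below)
  finally show ?thesis using s t by (simp add: w_def field_simps)
qed

section \<open>The tent barrier\<close>

definition tent :: "real \<Rightarrow> real \<Rightarrow> real \<Rightarrow> real \<Rightarrow> real" where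
  "tent \<beta> l r x = \<beta> * min (x - l) (r - x)"

lemma le_tent_if_lipschitz:
  assumes lip: "\<forall>x\<in>{l..r}. \<forall>y\<in>{l..r}. \<bar>g x - g y\<bar> \<le> \<beta> * \<bar>x - y\<bar>"
    and "g l = 0" "g r = 0" "x \<in> {l..r}"
  shows "g x \<le> tent \<beta> l r x"
proof -
  have "g x \<le> \<beta> * (x - l)" using lip[rule_format, of x l] assms by auto
  moreover have "g x \<le> \<beta> * (r - x)" using lip[rule_format, of x r] assms by auto
  ultimately show ?thesis by (simp add: tent_def min_def)
qed

lemma bridge_mean_ge_tent:
  assumes "l \<le> p" "p < q" "q < r" "\<beta> \<ge> 0" "tent \<beta> l r p \<le> u" "0 \<le> v"
  shows "tent \<beta> l r q - 2 * \<beta> * min (q - p) (r - q) \<le> ((r - q) * u + (q - p) * v) / ((q - p) + (r - q))"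
proof -
  define s where "s = q - p"
  define t where "t = r - q"
  have s: "s > 0" and t: "t > 0" using assms by (auto simp: s_def t_def)
  have Lp: "0 \<le> tent \<beta> l r p" "tent \<beta> l r p \<le> \<beta> * (s + t)"
    using assms by (auto simp: tent_def s_def t_def mult_left_mono)
  have "min (q - l) (r - q) \<le> min (p - l) (r - p) + s" using assms by (auto simp: s_def)
  then have Lq: "tent \<beta> l r q \<le> tent \<beta> l r p + \<beta> * s"
    using mult_left_mono[OF _ \<open>\<beta> \<ge> 0\<close>] by (fastforce simp: tent_def distrib_left)
  have Lq': "tent \<beta> l r q \<le> \<beta> * t"
    unfolding tent_def t_def using assms by (intro mult_left_mono) auto
  have "t * tent \<beta> l r p / (s + t) \<le> (t * u + s * v) / (s + t)"
    using s t assms by (intro divide_right_mono add_increasing2 mult_left_mono) auto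
  moreover have "tent \<beta> l r q - 2 * \<beta> * min s t \<le> t * tent \<beta> l r p / (s + t)"
  proof (cases "s \<le> t")
    case True
    have "s * tent \<beta> l r p / (s + t) \<le> \<beta> * s"
      using s t Lp by (simp add: divide_simps mult_left_mono)
    moreover have "t * tent \<beta> l r p / (s + t) = tent \<beta> l r p - s * tent \<beta> l r p / (s + t)"
      using s t by (simp add: field_simps)
    ultimately show ?thesis using Lq True by (simp add: min_def)
  next
    case False
    have "0 \<le> t * tent \<beta> l r p / (s + t)" using s t Lp by simp
    moreover have "0 \<le> \<beta> * t" using t assms(4) by simp
    ultimately show ?thesis using Lq' False by (simp add: min_def)
  qed
  ultimately show ?thesis by (simp add: s_def t_def)
qed

lemma tent_defect_bound:
  fixes s t \<beta> :: real
  assumes "s > 0" "t > 0"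
  shows "(2 * \<beta> * min s t)\<^sup>2 * (s + t) / (s * t) \<le> 8 * \<beta>\<^sup>2 * s"
proof (cases "s \<le> t")
  case True
  have "(2 * \<beta> * min s t)\<^sup>2 * (s + t) / (s * t) = 4 * \<beta>\<^sup>2 * s * ((s + t) / t)"
    using True assms by (simp add: power2_eq_square field_simps)
  also have "\<dots> \<le> 4 * \<beta>\<^sup>2 * s * 2"
    using True assms by (intro mult_left_mono) (auto simp: field_simps)
  finally show ?thesis by simp
next
  case False
  have "(2 * \<beta> * min s t)\<^sup>2 * (s + t) / (s * t) = 4 * \<beta>\<^sup>2 * t * ((s + t) / s)"
    using False assms by (simp add: power2_eq_square field_simps)
  also have "\<dots> \<le> 4 * \<beta>\<^sup>2 * s * 2"
    using False assms by (intro mult_mono) (auto simp: field_simps)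
  finally show ?thesis by simp
qed

lemma nn_integral_heat_bridge_above_tent_ge:
  assumes "l \<le> p" "p < q" "q < r" "\<beta> \<ge> 0" "tent \<beta> l r p \<le> u" "0 \<le> v"
  shows "ennreal (heat (r - p) (v - u) * exp (- (8 * \<beta>\<^sup>2 * (q - p)) - 3))
    \<le> (\<integral>\<^sup>+y. ennreal (if tent \<beta> l r q < y then heat (q - p) (y - u) * heat (r - q) (v - y) else 0) \<partial>lborel)"
proof -
  have s: "q - p > 0" and t: "r - q > 0" using assms by auto
  have d: "2 * \<beta> * min (q - p) (r - q) \<ge> 0" using assms by simp
  have "ennreal (heat (r - p) (v - u) * exp (- (8 * \<beta>\<^sup>2 * (q - p)) - 3))
     \<le> ennreal (heat (r - p) (v - u)
          * exp (- ((2 * \<beta> * min (q - p) (r - q))\<^sup>2 * (r - p) / ((q - p) * (r - q))) - 3))"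
    using tent_defect_bound[OF s t, of \<beta>] by (intro ennreal_leI mult_left_mono) auto
  also have "\<dots> \<le> (\<integral>\<^sup>+y. ennreal (if tent \<beta> l r q < y then heat (q - p) (y - u) * heat (r - q) (v - y) else 0) \<partial>lborel)"
    using nn_integral_heat_bridge_above_ge[OF s t d bridge_mean_ge_tent[OF assms]] by simp
  finally show ?thesis .
qed

section \<open>Brownian bridges killed below a barrier\<close>

lemma mono_le_of_Suc_steps:
  fixes f :: "nat \<Rightarrow> 'a::preorder"
  assumes "\<And>i. m \<le> i \<Longrightarrow> i < n \<Longrightarrow> f i \<le> f (Suc i)" "m \<le> n"
  shows "f m \<le> f n"
  using assms(2) by (induction n rule: dec_induct) (use assms(1) order_trans in auto)

text \<open>Unnormalised joint density of a Brownian bridge from a at time \<tau> 0 to b at time r,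
  observed at the times \<tau> 1, ..., \<tau> n and killed unless it is above h at each of them;
  x i is the value at time \<tau> (Suc i).\<close>

definition bridge_pos :: "real \<Rightarrow> (nat \<Rightarrow> real) \<Rightarrow> nat \<Rightarrow> real" where
  "bridge_pos a x i = (if i = 0 then a else x (i - 1))"

definition killed_kernel :: "(real \<Rightarrow> real) \<Rightarrow> (nat \<Rightarrow> real) \<Rightarrow> real \<Rightarrow> nat \<Rightarrow> (nat \<Rightarrow> real) \<Rightarrow> real"
  where "killed_kernel h \<tau> a n x =
    (\<Prod>i<n. if h (\<tau> (Suc i)) < x i then heat (\<tau> (Suc i) - \<tau> i) (x i - bridge_pos a x i) else 0)"

definition killed_bridge ::
    "(real \<Rightarrow> real) \<Rightarrow> (nat \<Rightarrow> real) \<Rightarrow> real \<Rightarrow> real \<Rightarrow> real \<Rightarrow> nat \<Rightarrow> (nat \<Rightarrow> real) \<Rightarrow> real"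
  where "killed_bridge h \<tau> r a b n x = killed_kernel h \<tau> a n x * heat (r - \<tau> n) (b - bridge_pos a x n)"

lemma killed_kernel_nonneg [simp]: "0 \<le> killed_kernel h \<tau> a n x"
  unfolding killed_kernel_def by (intro prod_nonneg) auto

lemma killed_bridge_nonneg [simp]: "0 \<le> killed_bridge h \<tau> r a b n x"
  by (simp add: killed_bridge_def)

lemma bridge_pos_cong: "(\<And>i. i < n \<Longrightarrow> x i = x' i) \<Longrightarrow> bridge_pos a x n = bridge_pos a x' n"
  by (simp add: bridge_pos_def)

lemma killed_kernel_cong:
  "(\<And>i. i < n \<Longrightarrow> x i = x' i) \<Longrightarrow> killed_kernel h \<tau> a n x = killed_kernel h \<tau> a n x'"
  unfolding killed_kernel_def bridge_pos_def by (intro prod.cong) auto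

lemma killed_bridge_Suc:
  "killed_bridge h \<tau> r a b (Suc n) x = killed_kernel h \<tau> a n x *
    (if h (\<tau> (Suc n)) < x n
     then heat (\<tau> (Suc n) - \<tau> n) (x n - bridge_pos a x n) * heat (r - \<tau> (Suc n)) (b - x n) else 0)"
  by (simp add: killed_bridge_def killed_kernel_def bridge_pos_def)

lemma killed_bridge_eq_0_if_below:
  assumes "0 < n" "bridge_pos a x n \<le> h (\<tau> n)"
  shows "killed_bridge h \<tau> r a b n x = 0"
  using assms by (cases n) (simp_all add: killed_bridge_Suc bridge_pos_def)

lemma killed_bridge_mono_barrier:
  assumes "\<And>i. i < n \<Longrightarrow> h' (\<tau> (Suc i)) \<le> h (\<tau> (Suc i))"
  shows "killed_bridge h \<tau> r a b n x \<le> killed_bridge h' \<tau> r a b n x"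
  unfolding killed_bridge_def killed_kernel_def using assms
  by (intro mult_right_mono prod_mono) force+

lemma killed_bridge_measurable:
  assumes "j \<in> J"
  shows "(\<lambda>x. killed_bridge h \<tau> r a b n (\<lambda>i. x (j, i))) \<in> borel_measurable (PiM (J \<times> {..<n}) (\<lambda>_. lborel))"
proof -
  have coord: "(\<lambda>x. x (j, i)) \<in> borel_measurable (PiM (J \<times> {..<n}) (\<lambda>_. lborel))" if "i < n" for i
    using assms that by simp
  have pos: "(\<lambda>x. bridge_pos a (\<lambda>i. x (j, i)) i) \<in> borel_measurable (PiM (J \<times> {..<n}) (\<lambda>_. lborel))"
    if "i \<le> n" for i
    using that by (cases i) (simp_all add: bridge_pos_def coord)
  have factor: "(\<lambda>x. if h (\<tau> (Suc i)) < x (j, i)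
      then heat (\<tau> (Suc i) - \<tau> i) (x (j, i) - bridge_pos a (\<lambda>i. x (j, i)) i) else 0)
    \<in> borel_measurable (PiM (J \<times> {..<n}) (\<lambda>_. lborel))" if "i < n" for i
  proof -
    have [measurable]: "(\<lambda>x. x (j, i)) \<in> borel_measurable (PiM (J \<times> {..<n}) (\<lambda>_. lborel))"
      "(\<lambda>x. bridge_pos a (\<lambda>i. x (j, i)) i) \<in> borel_measurable (PiM (J \<times> {..<n}) (\<lambda>_. lborel))"
      using that coord pos by simp_all
    show ?thesis by measurable
  qed
  note [measurable] = pos[of n]
  show ?thesis
    unfolding killed_bridge_def killed_kernel_def
    by (intro borel_measurable_times borel_measurable_prod factor) (auto simp: measurable_compose[OF _ heat_measurable])
qed

lemma killed_bridges_measurable: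
  "(\<lambda>x. ennreal (\<Prod>j\<in>J. killed_bridge h \<tau> r (a j) (b j) n (\<lambda>i. x (j, i))))
    \<in> borel_measurable (PiM (J \<times> {..<n}) (\<lambda>_. lborel))"
  by (intro measurable_compose[OF _ measurable_ennreal] borel_measurable_prod killed_bridge_measurable)

lemma prod_Times_singleton: "(\<Prod>p\<in>A \<times> {n}. g p) = (\<Prod>a\<in>A. g (a, n))"
proof -
  have "A \<times> {n} = (\<lambda>a. (a, n)) ` A" by auto
  then show ?thesis by (simp add: prod.reindex inj_on_def)
qed

lemma product_sigma_finite_lborel: "product_sigma_finite (\<lambda>_. lborel)"
  by (simp add: product_sigma_finite_def lborel.sigma_finite_measure_axioms)

lemma nn_integral_PiM_Times_singleton:
  fixes f :: "'i \<Rightarrow> real \<Rightarrow> ennreal"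
  assumes "finite J" "\<And>j. f j \<in> borel_measurable borel"
  shows "(\<integral>\<^sup>+y. (\<Prod>j\<in>J. f j (y (j, n))) \<partial>PiM (J \<times> {n}) (\<lambda>_. lborel)) = (\<Prod>j\<in>J. \<integral>\<^sup>+w. f j w \<partial>lborel)"
  using product_sigma_finite.product_nn_integral_prod[OF product_sigma_finite_lborel,
      of "J \<times> {n}" "\<lambda>p. f (fst p)"] assms
  by (simp add: prod_Times_singleton)

lemma killed_bridge_Suc_merge:
  assumes "j \<in> J"
  shows "killed_bridge h \<tau> r a b (Suc n) (\<lambda>i. merge (J \<times> {..<n}) (J \<times> {n}) (x, y) (j, i))
    = killed_kernel h \<tau> a n (\<lambda>i. x (j, i)) *
      (if h (\<tau> (Suc n)) < y (j, n)
       then heat (\<tau> (Suc n) - \<tau> n) (y (j, n) - bridge_pos a (\<lambda>i. x (j, i)) n)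
         * heat (r - \<tau> (Suc n)) (b - y (j, n)) else 0)"
proof -
  let ?z = "\<lambda>i. merge (J \<times> {..<n}) (J \<times> {n}) (x, y) (j, i)"
  have agree: "?z i = x (j, i)" if "i < n" for i
    using that assms by (simp add: merge_def)
  have "?z n = y (j, n)"
    using assms by (simp add: merge_def)
  then show ?thesis
    by (simp add: killed_bridge_Suc killed_kernel_cong[of n ?z, OF agree] bridge_pos_cong[of n ?z, OF agree])
qed

lemma nn_integral_killed_bridge_tent_Suc_ge_if_above:
  fixes x :: "'i \<times> nat \<Rightarrow> real" and \<tau> :: "nat \<Rightarrow> real" and \<beta> r :: real
  defines "h \<equiv> tent \<beta> (\<tau> 0) r"
  assumes J: "finite J" and \<tau>: "\<tau> 0 \<le> \<tau> n" "\<tau> n < \<tau> (Suc n)" "\<tau> (Suc n) < r" and "\<beta> \<ge> 0"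
    and b: "\<forall>j\<in>J. 0 \<le> b j"
    and above: "\<forall>j\<in>J. h (\<tau> n) \<le> bridge_pos (a j) (\<lambda>i. x (j, i)) n"
  shows "ennreal ((\<Prod>j\<in>J. killed_bridge h \<tau> r (a j) (b j) n (\<lambda>i. x (j, i)))
        * exp (- (8 * \<beta>\<^sup>2 * (\<tau> (Suc n) - \<tau> n)) - 3) ^ card J)
    \<le> (\<integral>\<^sup>+y. ennreal (\<Prod>j\<in>J. killed_bridge h \<tau> r (a j) (b j) (Suc n)
          (\<lambda>i. merge (J \<times> {..<n}) (J \<times> {n}) (x, y) (j, i))) \<partial>PiM (J \<times> {n}) (\<lambda>_. lborel))"
proof -
  define E where "E = exp (- (8 * \<beta>\<^sup>2 * (\<tau> (Suc n) - \<tau> n)) - 3)"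
  define K where "K = (\<Prod>j\<in>J. killed_kernel h \<tau> (a j) n (\<lambda>i. x (j, i)))"
  define u where "u j = bridge_pos (a j) (\<lambda>i. x (j, i)) n" for j
  define f where "f j w = (if h (\<tau> (Suc n)) < w
    then heat (\<tau> (Suc n) - \<tau> n) (w - u j) * heat (r - \<tau> (Suc n)) (b j - w) else 0)" for j w
  have [measurable]: "f j \<in> borel_measurable borel" for j unfolding f_def by measurable
  have "ennreal (\<Prod>j\<in>J. killed_bridge h \<tau> r (a j) (b j) (Suc n)
      (\<lambda>i. merge (J \<times> {..<n}) (J \<times> {n}) (x, y) (j, i))) = ennreal K * (\<Prod>j\<in>J. ennreal (f j (y (j, n))))"
    for y
    unfolding u_def f_def K_def
    by (simp add: killed_bridge_Suc_merge prod.distrib ennreal_mult prod_ennreal prod_nonneg)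
  moreover have "(\<integral>\<^sup>+y. (\<Prod>j\<in>J. ennreal (f j (y (j, n)))) \<partial>PiM (J \<times> {n}) (\<lambda>_. lborel))
      = (\<Prod>j\<in>J. \<integral>\<^sup>+w. ennreal (f j w) \<partial>lborel)"
    by (rule nn_integral_PiM_Times_singleton[OF J, of "\<lambda>j w. ennreal (f j w)"]) simp
  ultimately have integral: "(\<integral>\<^sup>+y. ennreal (\<Prod>j\<in>J. killed_bridge h \<tau> r (a j) (b j) (Suc n)
      (\<lambda>i. merge (J \<times> {..<n}) (J \<times> {n}) (x, y) (j, i))) \<partial>PiM (J \<times> {n}) (\<lambda>_. lborel))
      = ennreal K * (\<Prod>j\<in>J. \<integral>\<^sup>+w. ennreal (f j w) \<partial>lborel)"
    by (simp add: nn_integral_cmult)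
  have "ennreal (heat (r - \<tau> n) (b j - u j) * E) \<le> (\<integral>\<^sup>+w. ennreal (f j w) \<partial>lborel)" if "j \<in> J" for j
    unfolding f_def E_def h_def
    using nn_integral_heat_bridge_above_tent_ge[of "\<tau> 0" "\<tau> n" "\<tau> (Suc n)" r \<beta> "u j" "b j"]
      \<tau> \<open>\<beta> \<ge> 0\<close> b above that by (simp add: u_def h_def)
  then have bound: "ennreal (\<Prod>j\<in>J. heat (r - \<tau> n) (b j - u j) * E) \<le> (\<Prod>j\<in>J. \<integral>\<^sup>+w. ennreal (f j w) \<partial>lborel)"
    by (simp add: E_def prod_ennreal[symmetric] prod_mono_ennreal)
  have "(\<Prod>j\<in>J. killed_bridge h \<tau> r (a j) (b j) n (\<lambda>i. x (j, i))) * E ^ card J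
      = K * (\<Prod>j\<in>J. heat (r - \<tau> n) (b j - u j) * E)"
    by (simp add: killed_bridge_def K_def u_def prod.distrib)
  then have "ennreal ((\<Prod>j\<in>J. killed_bridge h \<tau> r (a j) (b j) n (\<lambda>i. x (j, i))) * E ^ card J)
      = ennreal K * ennreal (\<Prod>j\<in>J. heat (r - \<tau> n) (b j - u j) * E)"
    by (simp add: ennreal_mult prod_nonneg K_def E_def)
  also have "\<dots> \<le> ennreal K * (\<Prod>j\<in>J. \<integral>\<^sup>+w. ennreal (f j w) \<partial>lborel)"
    using bound by (rule mult_left_mono) simp
  finally show ?thesis unfolding integral E_def .
qed

lemma nn_integral_killed_bridge_tent_Suc_ge:
  fixes x :: "'i \<times> nat \<Rightarrow> real" and \<tau> :: "nat \<Rightarrow> real" and \<beta> r :: real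
  defines "h \<equiv> tent \<beta> (\<tau> 0) r"
  assumes J: "finite J" and \<tau>: "\<forall>i\<le>n. \<tau> i < \<tau> (Suc i)" "\<tau> (Suc n) < r" and "\<beta> \<ge> 0"
    and a: "\<forall>j\<in>J. 0 \<le> a j" and b: "\<forall>j\<in>J. 0 \<le> b j"
  shows "ennreal (\<Prod>j\<in>J. killed_bridge h \<tau> r (a j) (b j) n (\<lambda>i. x (j, i)))
        * ennreal (exp (- (8 * \<beta>\<^sup>2 * (\<tau> (Suc n) - \<tau> n)) - 3) ^ card J)
    \<le> (\<integral>\<^sup>+y. ennreal (\<Prod>j\<in>J. killed_bridge h \<tau> r (a j) (b j) (Suc n)
          (\<lambda>i. merge (J \<times> {..<n}) (J \<times> {n}) (x, y) (j, i))) \<partial>PiM (J \<times> {n}) (\<lambda>_. lborel))"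
proof -
  have \<tau>n: "\<tau> 0 \<le> \<tau> n" "\<tau> n < \<tau> (Suc n)"
    using \<tau>(1) mono_le_of_Suc_steps[of 0 n \<tau>] by (simp_all add: less_imp_le)
  show ?thesis
  proof (cases "\<forall>j\<in>J. h (\<tau> n) \<le> bridge_pos (a j) (\<lambda>i. x (j, i)) n")
    case True
    then show ?thesis
      using nn_integral_killed_bridge_tent_Suc_ge_if_above[where x = x and a = a,
          OF J \<tau>n \<tau>(2) \<open>\<beta> \<ge> 0\<close> b True[unfolded h_def]]
      by (simp add: h_def ennreal_mult prod_nonneg)
  next
    case False
    then obtain j where j: "j \<in> J" "bridge_pos (a j) (\<lambda>i. x (j, i)) n < h (\<tau> n)" by force
    moreover have "h (\<tau> 0) = 0" using \<tau>n \<tau>(2) by (simp add: h_def tent_def min_def)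
    ultimately have "n \<noteq> 0" using a by (cases n) (auto simp: bridge_pos_def)
    then have "killed_bridge h \<tau> r (a j) (b j) n (\<lambda>i. x (j, i)) = 0"
      using j by (simp add: killed_bridge_eq_0_if_below)
    then have "(\<Prod>j\<in>J. killed_bridge h \<tau> r (a j) (b j) n (\<lambda>i. x (j, i))) = 0"
      using J j(1) by (auto simp: prod_zero_iff)
    then show ?thesis by simp
  qed
qed

lemma nn_integral_killed_bridge_tent_ge:
  assumes J: "finite J" and \<tau>: "\<forall>i<n. \<tau> i < \<tau> (Suc i)" "\<tau> n < r" and "\<beta> \<ge> 0"
    and a: "\<forall>j\<in>J. 0 \<le> a j" and b: "\<forall>j\<in>J. 0 \<le> b j"
  shows "ennreal ((\<Prod>j\<in>J. heat (r - \<tau> 0) (b j - a j)) * exp (- (8 * \<beta>\<^sup>2 * (\<tau> n - \<tau> 0)) - 3 * real n) ^ card J)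
    \<le> (\<integral>\<^sup>+x. ennreal (\<Prod>j\<in>J. killed_bridge (tent \<beta> (\<tau> 0) r) \<tau> r (a j) (b j) n (\<lambda>i. x (j, i)))
          \<partial>PiM (J \<times> {..<n}) (\<lambda>_. lborel))"
  using \<tau>
proof (induction n)
  case 0
  then show ?case
    by (simp add: killed_bridge_def killed_kernel_def bridge_pos_def space_PiM_empty)
next
  case (Suc n)
  let ?F = "\<lambda>m x. ennreal (\<Prod>j\<in>J. killed_bridge (tent \<beta> (\<tau> 0) r) \<tau> r (a j) (b j) m (\<lambda>i. x (j, i)))"
  define H where "H = (\<Prod>j\<in>J. heat (r - \<tau> 0) (b j - a j))"
  define E where "E = exp (- (8 * \<beta>\<^sup>2 * (\<tau> (Suc n) - \<tau> n)) - 3)"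
  have slices: "J \<times> {..<Suc n} = J \<times> {..<n} \<union> J \<times> {n}" by auto
  have "\<forall>i\<le>n. \<tau> i < \<tau> (Suc i)" "\<tau> (Suc n) < r" using Suc.prems by (auto simp: less_Suc_eq_le)
  note step = nn_integral_killed_bridge_tent_Suc_ge[OF J this \<open>\<beta> \<ge> 0\<close> a b, folded E_def]
  have "exp (- (8 * \<beta>\<^sup>2 * (\<tau> (Suc n) - \<tau> 0)) - 3 * real (Suc n))
      = exp (- (8 * \<beta>\<^sup>2 * (\<tau> n - \<tau> 0)) - 3 * real n) * E"
    unfolding E_def mult_exp_exp by (simp add: algebra_simps)
  then have "ennreal (H * exp (- (8 * \<beta>\<^sup>2 * (\<tau> (Suc n) - \<tau> 0)) - 3 * real (Suc n)) ^ card J)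
      = ennreal (H * exp (- (8 * \<beta>\<^sup>2 * (\<tau> n - \<tau> 0)) - 3 * real n) ^ card J) * ennreal (E ^ card J)"
    by (simp add: H_def E_def power_mult_distrib mult.assoc ennreal_mult prod_nonneg)
  also have "\<dots> \<le> (\<integral>\<^sup>+x. ?F n x \<partial>PiM (J \<times> {..<n}) (\<lambda>_. lborel)) * ennreal (E ^ card J)"
    using Suc by (auto simp: H_def intro!: mult_right_mono)
  also have "\<dots> = (\<integral>\<^sup>+x. ?F n x * ennreal (E ^ card J) \<partial>PiM (J \<times> {..<n}) (\<lambda>_. lborel))"
    by (rule nn_integral_multc[OF killed_bridges_measurable, symmetric])
  also have "\<dots> \<le> (\<integral>\<^sup>+x. \<integral>\<^sup>+y. ?F (Suc n) (merge (J \<times> {..<n}) (J \<times> {n}) (x, y)) \<partial>PiM (J \<times> {n}) (\<lambda>_. lborel)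
      \<partial>PiM (J \<times> {..<n}) (\<lambda>_. lborel))"
    by (intro nn_integral_mono step)
  also have "\<dots> = (\<integral>\<^sup>+x. ?F (Suc n) x \<partial>PiM (J \<times> {..<Suc n}) (\<lambda>_. lborel))"
    unfolding slices using J killed_bridges_measurable[where J = J and n = "Suc n", unfolded slices]
    by (intro product_sigma_finite.product_nn_integral_fold[OF product_sigma_finite_lborel, symmetric]) auto
  finally show ?case by (simp add: H_def)
qed

section \<open>Lower bound for the free expectation\<close>

lemma bb_time_sorted_list_of_set:
  fixes P :: "real set" and l r :: real
  assumes "finite P" "P \<subseteq> {l<..<r}" "l < r"
  defines "\<tau> \<equiv> bb_time l r (sorted_list_of_set P)"
  shows "\<And>i. i < card P \<Longrightarrow> \<tau> (Suc i) \<in> P"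
    and "\<And>i. i \<le> card P \<Longrightarrow> \<tau> i < \<tau> (Suc i)"
proof -
  let ?ts = "sorted_list_of_set P"
  have nth: "\<tau> (Suc i) = ?ts ! i" if "i < card P" for i
    using that by (simp add: \<tau>_def bb_time_def)
  show mem: "\<tau> (Suc i) \<in> P" if "i < card P" for i
    using that assms(1) nth_mem[of i ?ts] by (simp add: nth)
  show "\<tau> i < \<tau> (Suc i)" if "i \<le> card P" for i
  proof (cases i)
    case 0
    then show ?thesis using mem[of 0] assms by (cases "card P") (auto simp: \<tau>_def bb_time_def)
  next
    case (Suc i')
    show ?thesis
    proof (cases "i < card P")
      case True
      have "sorted_wrt (<) ?ts" by simp
      then show ?thesis using True Suc nth by (simp add: sorted_wrt_nth_less)
    next
      case False
      then have "\<tau> i \<in> P" "\<tau> (Suc i) = r"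
        using mem[of i'] Suc that by (simp, simp add: \<tau>_def bb_time_def)
      then show ?thesis using assms(2) by auto
    qed
  qed
qed

lemma killed_bridge_bb_time:
  assumes "l < r"
  shows "killed_bridge h (bb_time l r ts) r a b (length ts) x
    = (if \<forall>i<length ts. h (ts ! i) < x i then bb_density l r a b ts x * heat (r - l) (b - a) else 0)"
proof -
  let ?\<tau> = "bb_time l r ts" and ?m = "length ts"
  have \<tau>: "?\<tau> (Suc i) = ts ! i" if "i < ?m" for i using that by (simp add: bb_time_def)
  show ?thesis
  proof (cases "\<forall>i<?m. h (ts ! i) < x i")
    case True
    define pos where "pos i = (if i = 0 then a else if i \<le> ?m then x (i - 1) else b)" for i
    have "bb_density l r a b ts x * heat (r - l) (b - a)
        = (\<Prod>i\<le>?m. heat (?\<tau> (Suc i) - ?\<tau> i) (pos (Suc i) - pos i))"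
      using heat_pos[of "r - l" "b - a"] assms by (simp add: bb_density_def pos_def Let_def)
    also have "\<dots> = killed_bridge h ?\<tau> r a b ?m x"
      unfolding killed_bridge_def killed_kernel_def lessThan_Suc_atMost[symmetric] prod.lessThan_Suc
      using True by (auto intro!: prod.cong simp: \<tau> pos_def bridge_pos_def bb_time_def)
    finally show ?thesis using True by simp
  next
    case False
    then obtain i where "i < ?m" "\<not> h (ts ! i) < x i" by auto
    then have "killed_kernel h ?\<tau> a ?m x = 0"
      unfolding killed_kernel_def by (intro prod_zero) (auto simp: \<tau>)
    with False show ?thesis by (auto simp: killed_bridge_def)
  qed
qed

lemma E_free_W_eq_nn_integral_killed_bridge:
  assumes "l < r"
  shows "E_free_W k l r am ap g P = (\<integral>\<^sup>+x. ennreal (\<Prod>j\<in>{1..k}.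
      killed_bridge g (bb_time l r (sorted_list_of_set P)) r (am j) (ap j) (card P) (\<lambda>i. x (j, i))
        / heat (r - l) (ap j - am j)) \<partial>PiM ({1..k} \<times> {..<card P}) (\<lambda>_. lborel))"
proof -
  let ?ts = "sorted_list_of_set P"
  have "indicator {x. \<forall>j\<in>{1..k}. \<forall>i<card P. g (?ts ! i) < x (j, i)} x
        * ennreal (\<Prod>j\<in>{1..k}. bb_density l r (am j) (ap j) ?ts (\<lambda>i. x (j, i)))
      = ennreal (\<Prod>j\<in>{1..k}. killed_bridge g (bb_time l r ?ts) r (am j) (ap j) (card P) (\<lambda>i. x (j, i))
          / heat (r - l) (ap j - am j))" for x :: "nat \<times> nat \<Rightarrow> real"
  proof (cases "\<forall>j\<in>{1..k}. \<forall>i<card P. g (?ts ! i) < x (j, i)")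
    case True
    then show ?thesis
      using killed_bridge_bb_time[OF assms, of g ?ts] heat_pos[of "r - l"] assms
      by (simp add: less_imp_neq[symmetric])
  next
    case False
    then obtain j where "j \<in> {1..k}" "\<not> (\<forall>i<card P. g (?ts ! i) < x (j, i))" by blast
    moreover have "killed_bridge g (bb_time l r ?ts) r (am j) (ap j) (card P) (\<lambda>i. x (j, i)) = 0"
      using calculation(2) killed_bridge_bb_time[OF assms, of g ?ts] by auto
    ultimately have zero: "(\<Prod>j\<in>{1..k}. killed_bridge g (bb_time l r ?ts) r (am j) (ap j) (card P) (\<lambda>i. x (j, i))
        / heat (r - l) (ap j - am j)) = 0"
      by (auto simp: prod_zero_iff)
    show ?thesis unfolding zero using False by simp
  qed
  then show ?thesis by (simp add: E_free_W_def Let_def)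
qed

lemma E_free_W_ge_nn_integral_killed_bridge:
  fixes l r :: real and P :: "real set" and k :: nat and am ap :: "nat \<Rightarrow> real"
  defines "\<tau> \<equiv> bb_time l r (sorted_list_of_set P)" and "H \<equiv> \<Prod>j\<in>{1..k}. heat (r - l) (ap j - am j)"
  assumes "l < r" and barrier: "\<And>i. i < card P \<Longrightarrow> g (\<tau> (Suc i)) \<le> h (\<tau> (Suc i))"
  shows "(\<integral>\<^sup>+x. ennreal (\<Prod>j\<in>{1..k}. killed_bridge h \<tau> r (am j) (ap j) (card P) (\<lambda>i. x (j, i)))
      \<partial>PiM ({1..k} \<times> {..<card P}) (\<lambda>_. lborel)) * ennreal (1 / H) \<le> E_free_W k l r am ap g P"
proof -
  let ?F = "\<lambda>h x. \<Prod>j\<in>{1..k}. killed_bridge h \<tau> r (am j) (ap j) (card P) (\<lambda>i. x (j, i))"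
  have H: "H > 0" using assms by (simp add: H_def heat_pos prod_pos)
  have "(\<integral>\<^sup>+x. ennreal (?F h x) \<partial>PiM ({1..k} \<times> {..<card P}) (\<lambda>_. lborel)) * ennreal (1 / H)
      = (\<integral>\<^sup>+x. ennreal (?F h x) * ennreal (1 / H) \<partial>PiM ({1..k} \<times> {..<card P}) (\<lambda>_. lborel))"
    by (rule nn_integral_multc[OF killed_bridges_measurable, symmetric])
  also have "\<dots> \<le> (\<integral>\<^sup>+x. ennreal (\<Prod>j\<in>{1..k}. killed_bridge g \<tau> r (am j) (ap j) (card P) (\<lambda>i. x (j, i))
      / heat (r - l) (ap j - am j)) \<partial>PiM ({1..k} \<times> {..<card P}) (\<lambda>_. lborel))"
  proof (intro nn_integral_mono)
    fix x :: "nat \<times> nat \<Rightarrow> real"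
    have "ennreal (?F h x) * ennreal (1 / H) = ennreal (?F h x / H)"
      using H by (simp add: ennreal_mult[symmetric] prod_nonneg)
    also have "\<dots> \<le> ennreal (?F g x / H)"
      using barrier H by (intro ennreal_leI divide_right_mono prod_mono) (auto intro: killed_bridge_mono_barrier)
    also have "?F g x / H = (\<Prod>j\<in>{1..k}. killed_bridge g \<tau> r (am j) (ap j) (card P) (\<lambda>i. x (j, i))
        / heat (r - l) (ap j - am j))"
      by (simp add: H_def prod_dividef)
    finally show "ennreal (?F h x) * ennreal (1 / H) \<le> ennreal (\<Prod>j\<in>{1..k}.
        killed_bridge g \<tau> r (am j) (ap j) (card P) (\<lambda>i. x (j, i)) / heat (r - l) (ap j - am j))" .
  qed
  also have "\<dots> = E_free_W k l r am ap g P"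
    using E_free_W_eq_nn_integral_killed_bridge[OF \<open>l < r\<close>] by (simp add: \<tau>_def)
  finally show ?thesis .
qed

lemma E_free_W_ge_exp:
  assumes "l < r" "finite P" and P: "P \<subseteq> {l<..<l + \<delta>} \<inter> {l<..<r}" and "0 \<le> \<delta>" "0 \<le> \<beta>"
    and lip: "\<forall>x\<in>{l..r}. \<forall>y\<in>{l..r}. \<bar>g x - g y\<bar> \<le> \<beta> * \<bar>x - y\<bar>" and "g l = 0" "g r = 0"
    and am: "\<forall>j\<in>{1..k}. 0 \<le> am j" and ap: "\<forall>j\<in>{1..k}. 0 \<le> ap j"
  shows "ennreal (exp (- (8 * \<beta>\<^sup>2 * \<delta>) - 3 * real (card P)) ^ k) \<le> E_free_W k l r am ap g P"
proof -
  define \<tau> where "\<tau> = bb_time l r (sorted_list_of_set P)"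
  define m where "m = card P"
  define H where "H = (\<Prod>j\<in>{1..k}. heat (r - l) (ap j - am j))"
  have H: "H > 0" using assms by (simp add: H_def heat_pos prod_pos)
  have "P \<subseteq> {l<..<r}" using P by auto
  note bb = bb_time_sorted_list_of_set[OF \<open>finite P\<close> this \<open>l < r\<close>, folded \<tau>_def m_def]
  have \<tau>0: "\<tau> 0 = l" and \<tau>m: "\<tau> (Suc m) = r" by (simp_all add: \<tau>_def m_def bb_time_def)
  have \<tau>: "\<forall>i<m. \<tau> i < \<tau> (Suc i)" "\<tau> m < r" using bb(2)[of m] by (auto simp: \<tau>m bb(2))
  have width: "\<tau> m - \<tau> 0 \<le> \<delta>"
  proof (cases m)
    case (Suc m')
    then show ?thesis using bb(1)[of m'] P \<tau>0 by auto
  qed (simp add: \<open>0 \<le> \<delta>\<close>)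
  have barrier: "g (\<tau> (Suc i)) \<le> tent \<beta> (\<tau> 0) r (\<tau> (Suc i))" if "i < m" for i
    unfolding \<tau>0 using bb(1)[OF that] P by (intro le_tent_if_lipschitz[OF lip \<open>g l = 0\<close> \<open>g r = 0\<close>]) auto
  have "exp (- (8 * \<beta>\<^sup>2 * \<delta>) - 3 * real m) \<le> exp (- (8 * \<beta>\<^sup>2 * (\<tau> m - \<tau> 0)) - 3 * real m)"
    using width \<open>0 \<le> \<beta>\<close> by (simp add: mult_left_mono)
  then have "ennreal (exp (- (8 * \<beta>\<^sup>2 * \<delta>) - 3 * real m) ^ k)
      \<le> ennreal (H * exp (- (8 * \<beta>\<^sup>2 * (\<tau> m - \<tau> 0)) - 3 * real m) ^ card {1..k}) * ennreal (1 / H)"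
    using H by (simp add: ennreal_mult[symmetric] power_mono)
  also have "\<dots> \<le> (\<integral>\<^sup>+x. ennreal (\<Prod>j\<in>{1..k}. killed_bridge (tent \<beta> (\<tau> 0) r) \<tau> r (am j) (ap j) m
      (\<lambda>i. x (j, i))) \<partial>PiM ({1..k} \<times> {..<m}) (\<lambda>_. lborel)) * ennreal (1 / H)"
    using nn_integral_killed_bridge_tent_ge[OF _ \<tau> \<open>0 \<le> \<beta>\<close> am ap]
    by (intro mult_right_mono) (simp_all add: H_def \<tau>0)
  also have "\<dots> \<le> E_free_W k l r am ap g P"
    using E_free_W_ge_nn_integral_killed_bridge[OF \<open>l < r\<close>, of P g "tent \<beta> (\<tau> 0) r"] barrier
    by (simp add: \<tau>_def m_def H_def)
  finally show ?thesis by (simp add: m_def)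
qed

lemma nonneg_if_gaps_nonneg:
  fixes f :: "nat \<Rightarrow> real"
  assumes "\<forall>i\<in>{1..<k}. c \<le> f i - f (i + 1)" "0 \<le> c" "0 \<le> f k" "j \<in> {1..k}"
  shows "0 \<le> f j"
proof -
  have "- f i \<le> - f (Suc i)" if "j \<le> i" "i < k" for i
    using assms(1)[rule_format, of i] assms(2,4) that by auto
  then have "- f j \<le> - f k"
    using mono_le_of_Suc_steps[of j k "\<lambda>i. - f i"] assms(4) by simp
  then show ?thesis using assms(3) by simp
qed

lemma inverse_mult_exp_le_tent_cost:
  fixes T b0 b1 :: real and k n :: nat
  assumes "1 \<le> T" "0 \<le> b0" "real n \<le> b0 * T"
  defines "C \<equiv> 1 + real k * (8 * b1\<^sup>2 + 3 * b0)"
  shows "inverse C * exp (- C * T powr (5/2)) \<le> exp (- (8 * (b1 * T)\<^sup>2 * sqrt T) - 3 * real n) ^ k"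
proof -
  define cost where "cost = 8 * (b1 * T)\<^sup>2 * sqrt T + 3 * real n"
  have C: "1 \<le> C" using assms by (simp add: C_def)
  have "T powr (5/2) = T powr 2 * T powr (1/2)"
    by (simp flip: powr_add)
  then have T52: "T powr (5/2) = T\<^sup>2 * sqrt T"
    using assms by (simp add: powr_half_sqrt)
  have "T \<le> T powr (5/2)"
    using powr_mono[of 1 "5/2" T] assms by simp
  then have "3 * real n \<le> 3 * b0 * T powr (5/2)"
    using assms mult_left_mono[of T "T powr (5/2)" b0] by linarith
  then have "cost \<le> (8 * b1\<^sup>2 + 3 * b0) * T powr (5/2)"
    unfolding cost_def T52 by (simp add: power_mult_distrib algebra_simps)
  then have "real k * cost \<le> real k * (8 * b1\<^sup>2 + 3 * b0) * T powr (5/2)"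
    by (simp add: mult_left_mono mult.assoc)
  also have "\<dots> \<le> C * T powr (5/2)"
    by (simp add: C_def distrib_right)
  finally have cost_bound: "exp (- C * T powr (5/2)) \<le> exp (- cost) ^ k"
    by (simp add: exp_of_nat_mult[symmetric])
  have inverse: "inverse C * exp (- C * T powr (5/2)) \<le> exp (- C * T powr (5/2))"
    using C by (intro mult_left_le_one_le) (auto simp: inverse_le_1_iff)
  show ?thesis using order_trans[OF inverse cost_bound] by (simp add: cost_def)
qed

theorem mainTheorem4:
  fixes k :: nat and b0 b1 lam0 lam1 :: real
  assumes "k \<ge> 1" "b0 > 0" "b1 > 0" "lam0 > 0" "lam1 > 0"
  shows "\<exists>C > 0. \<forall>(b2::real) (T::real) (l::real) (r::real) (am::nat \<Rightarrow> real) (ap::nat \<Rightarrow> real)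
            (g::real \<Rightarrow> real) (P::real set).
     b2 > 0 \<and> T \<ge> 10 \<and> l < r \<and>
     g l = 0 \<and> g r = 0 \<and>
     finite P \<and> P \<subseteq> {l<..<l + sqrt T} \<inter> {l<..<r} \<and>
     r - l \<le> b0 * T \<and> real (card P) \<le> b0 * T \<and>
     (\<forall>x\<in>{l..r}. \<forall>y\<in>{l..r}. \<bar>g x - g y\<bar> \<le> b1 * T * \<bar>x - y\<bar>) \<and>
     (\<forall>j\<in>{1..<k}. am j - am (j + 1) \<ge> lam0 * sqrt T \<and> ap j - ap (j + 1) \<ge> lam0 * sqrt T) \<and>
     am k - g l \<ge> lam1 * T \<and> ap k - g r \<ge> lam1 * T \<and>
     am 1 - g l \<le> b2 * T\<^sup>2 \<and> ap 1 - g r \<le> b2 * T\<^sup>2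
     \<longrightarrow> E_free_W k l r am ap g P \<ge> ennreal (inverse C * exp (- C * T powr (5/2)))"
proof -
  define C where "C = 1 + real k * (8 * b1\<^sup>2 + 3 * b0)"
  show ?thesis
  proof ((intro exI[of _ C] conjI allI impI; (elim conjE)?), goal_cases)
    case 1
    show ?case using assms by (simp add: C_def add_pos_nonneg)
  next
    case (2 b2 T l r am ap g P)
    then have T: "1 \<le> T" "0 \<le> lam0 * sqrt T" "0 \<le> lam1 * T" using assms by simp_all
    have "\<forall>j\<in>{1..k}. 0 \<le> am j" "\<forall>j\<in>{1..k}. 0 \<le> ap j"
      using 2 T by (auto intro: nonneg_if_gaps_nonneg[of k "lam0 * sqrt T"])
    then have "ennreal (exp (- (8 * (b1 * T)\<^sup>2 * sqrt T) - 3 * real (card P)) ^ k) \<le> E_free_W k l r am ap g P"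
      using 2 assms by (intro E_free_W_ge_exp) auto
    moreover have "inverse C * exp (- C * T powr (5/2)) \<le> exp (- (8 * (b1 * T)\<^sup>2 * sqrt T) - 3 * real (card P)) ^ k"
      unfolding C_def using 2 T assms by (intro inverse_mult_exp_le_tent_cost) auto
    ultimately show ?case by (meson ennreal_leI order_trans)
  qed
qed

end
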